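(* Let $0<\underline\beta<\bar\beta$ and let $\alpha,\xi>0$, $\varphi$, $\omega$ and the sets $\mathcal{J}(\beta,D)$ be as in the context. Let $\mathcal{P}'$ be a parameter set such that $\mathcal{J}(\beta,D)\subset\mathcal{H}(\beta,\mathcal{P}')$ for every $\beta\in[\underline\beta,\bar\beta]$ and every positive even integer $D$. Suppose one observes i.i.d. random variables $X_1,\dots,X_n$ with common density $s$ on $\mathbb{R}$. Then for every $\beta\in[\underline\beta,\bar\beta]$ there exists a constant $\kappa_\beta>0$ such that for all $n\ge1$, $$\inf_{\tilde s}\ \sup_{s\in\mathcal{H}(\beta,\mathcal{P}')}\mathbb{E}_s\big[d_H^2(s,\tilde s)\big]\ \ge\ \kappa_\beta\, n^{-\frac{2\beta}{2\beta+1}},$$ where the infimum is over all estimators $\tilde s$ (measurable functions of $X_1,\dots,X_n$).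
   Context: $\psi(x)=\pi^{-1/2}e^{-x^2}$, $\psi_\sigma(x)=\sigma^{-1}\psi(x/\sigma)$. Hellinger distance: $d_H(g,h)=\frac{1}{\sqrt2}\|\sqrt g-\sqrt h\|_{L^2}$. For $\beta>0$, $r$ is the largest integer strictly less than $\beta$. A parameter set $\mathcal{P}=\{\gamma,l^+,L,\varepsilon,C,\alpha,\xi,M\}$ consists of a polynomial $L$ and constants $\gamma,l^+,\varepsilon,C,\alpha,\xi,M$; $\mathcal{H}(\beta,\mathcal{P})$ is the set of probability densities $f$ on $\mathbb{R}$ with: $\ln f$ $r$ times differentiable, $|(\ln f)^{(r)}(x)-(\ln f)^{(r)}(y)|\le r!L(x)|y-x|^{\beta-r}$ whenever $|x-y|\le\gamma$, $|(\ln f)^{(j)}(0)|\le l^+$ for $j=0,\dots,r$; $\int|(\ln f)^{(j)}|^{(2\beta+\varepsilon)/j}f\le C$ ($j=1,\dots,r$) and $\int|L|^{2+\varepsilon/\beta}f\le C$; $f\le M\psi$; $f>0$, $f$ nondecreasing on $(-\infty,-\alpha)$, nonincreasing on $(\alpha,\infty)$, $f\ge\xi$ on $[-\alpha,\alpha]$. Construction: $\varphi:\mathbb{R}\to\mathbb{R}$ is infinitely differentiable with compact support in $(1/4,3/4)$, $\int\varphi=0$, $\int\varphi^2=1$; $A=\max_{0\le k\le r+1}\|\varphi^{(k)}\|_\infty$, assumed $>1$. For a positive even integer $D$ and $j\in\{1,\dots,D\}$, $\varphi_j(x)=\frac{\xi D^{-\beta}}{A}\varphi\big(\frac{D}{\alpha}(x+\frac\alpha2)-(j-1)\big)$.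 $\mathcal{T}(\alpha,\xi)$ is the set of functions $\omega:\mathbb{R}\to\mathbb{R}^+$ nondecreasing on $(-\infty,-\alpha/2)$, nonincreasing on $(\alpha/2,\infty)$, with $\omega=2\xi$ on $[-3\alpha/4,3\alpha/4]$ and $\omega(-\alpha)=\omega(\alpha)=\xi$. Fix $\omega\in\mathcal{T}(\alpha,\xi)\cap\mathcal{H}(\beta,\tilde{\mathcal P})$ for every $\beta\in[\underline\beta,\bar\beta]$, where $\tilde{\mathcal P}=\{\alpha/4,\ln(2\xi),\tilde L,\tilde\varepsilon,\tilde C,\alpha,\xi,\tilde M\}$. For $\theta\in\{0,1\}^D$, $f_\theta(x)=\omega(x)+\sum_{j=1}^D(2\theta_j-1)\varphi_j(x)$, and $\mathcal{J}(\beta,D)=\{f_\theta:\theta\in\{0,1\}^D\}$. *)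

theory Defs
  imports "HOL-Probability.Probability" "HOL-Computational_Algebra.Polynomial"
begin

definition psi :: "real \<Rightarrow> real" where
  "psi x = exp (- (x\<^sup>2)) / sqrt pi"

definition hellinger_sq :: "(real \<Rightarrow> real) \<Rightarrow> (real \<Rightarrow> real) \<Rightarrow> ennreal" where
  "hellinger_sq g h = (\<integral>\<^sup>+ x. ennreal ((sqrt (g x) - sqrt (h x))\<^sup>2 / 2) \<partial>lborel)"

text \<open>r = largest integer strictly less than beta (for beta > 0).\<close>
definition rr :: "real \<Rightarrow> nat" where
  "rr \<beta> = nat (\<lceil>\<beta>\<rceil> - 1)"

definition dn :: "nat \<Rightarrow> (real \<Rightarrow> real) \<Rightarrow> real \<Rightarrow> real" where
  "dn j g = (deriv ^^ j) g"

record params =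
  p_gamma :: real
  p_lplus :: real
  p_L :: "real poly"
  p_eps :: real
  p_C :: real
  p_alpha :: real
  p_xi :: real
  p_M :: real

definition is_density :: "(real \<Rightarrow> real) \<Rightarrow> bool" where
  "is_density f \<longleftrightarrow> f \<in> borel_measurable borel \<and> (\<forall>x. 0 \<le> f x)
      \<and> (\<integral>\<^sup>+ x. ennreal (f x) \<partial>lborel) = 1"

definition Hclass :: "real \<Rightarrow> params \<Rightarrow> (real \<Rightarrow> real) set" where
  "Hclass \<beta> P = {f. is_density f \<and>
     (let g = (\<lambda>x. ln (f x)); r = rr \<beta>; L = (\<lambda>x. poly (p_L P) x) in
       (\<forall>j<r. \<forall>x. dn j g differentiable at x)
     \<and> (\<forall>x y. \<bar>x - y\<bar> \<le> p_gamma P \<longrightarrow>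
           \<bar>dn r g x - dn r g y\<bar> \<le> fact r * L x * \<bar>y - x\<bar> powr (\<beta> - real r))
     \<and> (\<forall>j\<le>r. \<bar>dn j g 0\<bar> \<le> p_lplus P)
     \<and> (\<forall>j\<in>{1..r}. (\<integral>\<^sup>+ x. ennreal (\<bar>dn j g x\<bar> powr ((2*\<beta> + p_eps P) / real j) * f x) \<partial>lborel)
                     \<le> ennreal (p_C P))
     \<and> (\<integral>\<^sup>+ x. ennreal (\<bar>L x\<bar> powr (2 + p_eps P / \<beta>) * f x) \<partial>lborel) \<le> ennreal (p_C P)
     \<and> (\<forall>x. f x \<le> p_M P * psi x)
     \<and> (\<forall>x. 0 < f x)
     \<and> (\<forall>x y. x \<le> y \<and> y < - p_alpha P \<longrightarrow> f x \<le> f y)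
     \<and> (\<forall>x y. p_alpha P < x \<and> x \<le> y \<longrightarrow> f y \<le> f x)
     \<and> (\<forall>x\<in>{- p_alpha P .. p_alpha P}. p_xi P \<le> f x))}"

definition Aconst :: "(real \<Rightarrow> real) \<Rightarrow> real \<Rightarrow> real" where
  "Aconst \<phi> \<beta> = Max ((\<lambda>k. Sup (range (\<lambda>x. \<bar>dn k \<phi> x\<bar>))) ` {0..rr \<beta> + 1})"

definition phij :: "(real \<Rightarrow> real) \<Rightarrow> real \<Rightarrow> real \<Rightarrow> real \<Rightarrow> nat \<Rightarrow> nat \<Rightarrow> real \<Rightarrow> real" where
  "phij \<phi> \<alpha> \<xi> \<beta> D j x =
     \<xi> * real D powr (-\<beta>) / Aconst \<phi> \<beta> * \<phi> (real D / \<alpha> * (x + \<alpha> / 2) - (real j - 1))"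

definition Tclass :: "real \<Rightarrow> real \<Rightarrow> (real \<Rightarrow> real) set" where
  "Tclass \<alpha> \<xi> = {\<omega>. (\<forall>x. 0 \<le> \<omega> x)
     \<and> (\<forall>x y. x \<le> y \<and> y < - \<alpha> / 2 \<longrightarrow> \<omega> x \<le> \<omega> y)
     \<and> (\<forall>x y. \<alpha> / 2 < x \<and> x \<le> y \<longrightarrow> \<omega> y \<le> \<omega> x)
     \<and> (\<forall>x\<in>{- 3 * \<alpha> / 4 .. 3 * \<alpha> / 4}. \<omega> x = 2 * \<xi>)
     \<and> \<omega> (- \<alpha>) = \<xi> \<and> \<omega> \<alpha> = \<xi>}"

text \<open>J(beta,D) = { f_theta : theta in {0,1}^D }, theta encoded as a predicate on {1..D}.\<close>
definition Jclass :: "(real \<Rightarrow> real) \<Rightarrow> (real \<Rightarrow> real) \<Rightarrow> real \<Rightarrow> real \<Rightarrow> real \<Rightarrow> nat \<Rightarrow> (real \<Rightarrow> real) set" where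
  "Jclass \<phi> \<omega> \<alpha> \<xi> \<beta> D = {f. \<exists>\<theta> :: nat \<Rightarrow> bool.
      f = (\<lambda>x. \<omega> x + (\<Sum>j=1..D. (if \<theta> j then 1 else -1) * phij \<phi> \<alpha> \<xi> \<beta> D j x))}"

definition estimators :: "nat \<Rightarrow> ((nat \<Rightarrow> real) \<Rightarrow> real \<Rightarrow> real) set" where
  "estimators n = {est. (\<lambda>(X, x). est X x) \<in> borel_measurable (PiM {..<n} (\<lambda>_. lborel) \<Otimes>\<^sub>M lborel)
                        \<and> (\<forall>X x. 0 \<le> est X x)}"

definition risk :: "nat \<Rightarrow> (real \<Rightarrow> real) \<Rightarrow> ((nat \<Rightarrow> real) \<Rightarrow> real \<Rightarrow> real) \<Rightarrow> ennreal" where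
  "risk n s est = (\<integral>\<^sup>+ X. hellinger_sq s (est X) \<partial>(PiM {..<n} (\<lambda>_. density lborel (\<lambda>x. ennreal (s x)))))"

end

theory Submission
  imports Defs
begin

text \<open>Assouad's method. On \<open>D \<asymp> n^(1/(2\<beta>+1))\<close> disjoint subintervals of \<open>[-\<alpha>/2, \<alpha>/2]\<close>,
  where \<open>\<omega>\<close> is flat, perturb \<open>\<omega>\<close> by bumps \<open>\<plusminus>c D^(-\<beta>) \<phi>(D x - j)\<close>; the \<open>2^D\<close> resulting
  densities lie in the class. Flipping one sign lowers the Hellinger affinity only by
  \<open>O(D^(-2\<beta>-1)) = O(1/n)\<close>, so the laws of \<open>n\<close>-samples from neighbouring vertices overlap by at
  least \<open>1/2\<close>; yet on the support of the flipped bump every candidate density is at squared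
  Hellinger distance of order \<open>D^(-2\<beta>-1)\<close> from one of the two. Summing over the \<open>D\<close> coordinates
  gives a risk of order \<open>D^(-2\<beta>) \<asymp> n^(-2\<beta>/(2\<beta>+1))\<close>.\<close>

lemma PiM_density_lborel:
  fixes f :: "real \<Rightarrow> real" and I :: "'i set"
  assumes I: "finite I" and [measurable]: "f \<in> borel_measurable borel"
    and nonneg: "\<And>x. 0 \<le> f x" and total: "(\<integral>\<^sup>+ x. ennreal (f x) \<partial>lborel) = 1"
  shows "PiM I (\<lambda>_. density lborel (\<lambda>x. ennreal (f x)))
       = density (PiM I (\<lambda>_. lborel)) (\<lambda>X. ennreal (\<Prod>i\<in>I. f (X i)))"
proof -
  let ?M = "density lborel (\<lambda>x. ennreal (f x))"
  interpret M: prob_space ?M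
    by (rule prob_spaceI) (simp add: emeasure_density total)
  interpret PM: product_sigma_finite "\<lambda>_. ?M"
    unfolding product_sigma_finite_def using M.sigma_finite_measure_axioms by blast
  interpret PL: product_sigma_finite "\<lambda>_. lborel :: real measure"
    unfolding product_sigma_finite_def using lborel.sigma_finite_measure_axioms by blast
  show ?thesis
  proof (rule PM.PiM_eqI[symmetric, OF I])
    show "sets (density (PiM I (\<lambda>_. lborel)) (\<lambda>X. ennreal (\<Prod>i\<in>I. f (X i)))) = sets (PiM I (\<lambda>_. ?M))"
      by (rule trans[OF sets_density sets_PiM_cong]) auto
  next
    fix A assume "\<And>i. i \<in> I \<Longrightarrow> A i \<in> sets ?M"
    then have A: "\<And>i. i \<in> I \<Longrightarrow> A i \<in> sets borel" by simp
    have box: "indicator (Pi\<^sub>E I A) X = (\<Prod>i\<in>I. indicator (A i) (X i) :: ennreal)"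
      if "X \<in> extensional I" for X
      using that I by (auto simp: indicator_def PiE_def Pi_def intro!: prod_zero)
    have "emeasure (density (PiM I (\<lambda>_. lborel)) (\<lambda>X. ennreal (\<Prod>i\<in>I. f (X i)))) (Pi\<^sub>E I A)
       = (\<integral>\<^sup>+ X. ennreal (\<Prod>i\<in>I. f (X i)) * indicator (Pi\<^sub>E I A) X \<partial>PiM I (\<lambda>_. lborel))"
      using A I by (subst emeasure_density) (auto intro: sets_PiM_I_finite)
    also have "\<dots> = (\<integral>\<^sup>+ X. (\<Prod>i\<in>I. ennreal (f (X i)) * indicator (A i) (X i)) \<partial>PiM I (\<lambda>_. lborel))"
    proof (rule nn_integral_cong)
      fix X assume "X \<in> space (PiM I (\<lambda>_. lborel :: real measure))"
      then have "X \<in> extensional I" by (simp add: space_PiM PiE_def)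
      then show "ennreal (\<Prod>i\<in>I. f (X i)) * indicator (Pi\<^sub>E I A) X
          = (\<Prod>i\<in>I. ennreal (f (X i)) * indicator (A i) (X i))"
        by (simp add: box prod_ennreal nonneg prod.distrib)
    qed
    also have "\<dots> = (\<Prod>i\<in>I. \<integral>\<^sup>+ x. ennreal (f x) * indicator (A i) x \<partial>lborel)"
      using A by (subst PL.product_nn_integral_prod[OF I]) auto
    also have "\<dots> = (\<Prod>i\<in>I. emeasure ?M (A i))"
      using A by (intro prod.cong refl) (simp add: emeasure_density)
    finally show "emeasure (density (PiM I (\<lambda>_. lborel)) (\<lambda>X. ennreal (\<Prod>i\<in>I. f (X i)))) (Pi\<^sub>E I A)
        = (\<Prod>i\<in>I. emeasure ?M (A i))" .
  qed
qed

lemma nn_integral_PiM_lborel_prod: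
  fixes f :: "real \<Rightarrow> real"
  assumes [measurable]: "f \<in> borel_measurable borel" and nonneg: "\<And>x. 0 \<le> f x"
  shows "(\<integral>\<^sup>+ X. ennreal (\<Prod>i<n. f (X i)) \<partial>PiM {..<n} (\<lambda>_. lborel))
       = (\<integral>\<^sup>+ x. ennreal (f x) \<partial>lborel) ^ n"
proof -
  interpret PL: product_sigma_finite "\<lambda>_. lborel :: real measure"
    unfolding product_sigma_finite_def using lborel.sigma_finite_measure_axioms by blast
  have "(\<integral>\<^sup>+ X. ennreal (\<Prod>i<n. f (X i)) \<partial>PiM {..<n} (\<lambda>_. lborel))
      = (\<integral>\<^sup>+ X. (\<Prod>i<n. ennreal (f (X i))) \<partial>PiM {..<n} (\<lambda>_. lborel))"
    using nonneg by (simp add: prod_ennreal)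
  also have "\<dots> = (\<Prod>i<n. \<integral>\<^sup>+ x. ennreal (f x) \<partial>lborel)"
    by (subst PL.product_nn_integral_prod) auto
  finally show ?thesis by simp
qed

lemma real_sqrt_prod: "sqrt (\<Prod>i\<in>I. f i) = (\<Prod>i\<in>I. sqrt (f i))"
  by (induction I rule: infinite_finite_induct) (auto simp: real_sqrt_mult)

lemma sqrt_diff_sq_eq:
  fixes a b :: real assumes "0 \<le> a" "0 \<le> b"
  shows "(sqrt a - sqrt b)\<^sup>2 = a + b - 2 * sqrt (a * b)"
  using assms by (simp add: power2_eq_square algebra_simps real_sqrt_mult)

lemma sqrt_diff_sq_mult_add_le:
  fixes a b :: real assumes "0 \<le> a" "0 \<le> b"
  shows "(sqrt a - sqrt b)\<^sup>2 * (a + b) \<le> (a - b)\<^sup>2"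
proof -
  have "(a - b)\<^sup>2 = (sqrt a - sqrt b)\<^sup>2 * (sqrt a + sqrt b)\<^sup>2"
    using assms by (simp add: power2_eq_square algebra_simps)
  moreover have "a + b \<le> (sqrt a + sqrt b)\<^sup>2"
    using assms by (simp add: power2_eq_square algebra_simps)
  ultimately show ?thesis by (simp add: mult_left_mono)
qed

lemma diff_sq_le_sqrt_diff_sq:
  fixes a b :: real assumes "0 \<le> a" "0 \<le> b"
  shows "(a - b)\<^sup>2 \<le> 2 * (a + b) * (sqrt a - sqrt b)\<^sup>2"
proof -
  have "(a - b)\<^sup>2 = (sqrt a - sqrt b)\<^sup>2 * (sqrt a + sqrt b)\<^sup>2"
    using assms by (simp add: power2_eq_square algebra_simps)
  moreover have "(sqrt a + sqrt b)\<^sup>2 \<le> 2 * (a + b)"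
    using assms zero_le_power2[of "sqrt a - sqrt b"]
    by (simp add: power2_eq_square algebra_simps)
  ultimately show ?thesis
    by (metis mult.commute mult_left_mono zero_le_power2)
qed

lemma diff_sq_le_twice_sum_diff_sq:
  fixes x y z :: real shows "(x - y)\<^sup>2 \<le> 2 * ((x - z)\<^sup>2 + (y - z)\<^sup>2)"
  using zero_le_power2[of "x + y - 2 * z"] by (simp add: power2_eq_square algebra_simps)

lemma mult_le_min_sq_add_sum_sq:
  fixes p q :: real assumes "0 \<le> p" "0 \<le> q"
  shows "5 * (p * q) \<le> min (p\<^sup>2) (q\<^sup>2) + 17/8 * (p\<^sup>2 + q\<^sup>2)"
proof (cases "p \<le> q")
  case True
  then have "min (p\<^sup>2) (q\<^sup>2) = p\<^sup>2" using assms by (simp add: power_mono min_def)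
  moreover have "0 \<le> (5*p - 4*q)\<^sup>2 + q\<^sup>2" by simp
  ultimately show ?thesis by (simp add: power2_eq_square field_simps)
next
  case False
  then have "min (p\<^sup>2) (q\<^sup>2) = q\<^sup>2" using assms by (simp add: power_mono min_def)
  moreover have "0 \<le> (5*q - 4*p)\<^sup>2 + p\<^sup>2" by simp
  ultimately show ?thesis by (simp add: power2_eq_square field_simps)
qed

lemma ennreal_le_of_le_add_ennreal:
  fixes x :: ennreal assumes le: "ennreal c \<le> x + ennreal e" and "0 \<le> e"
  shows "ennreal (c - e) \<le> x"
proof (cases x rule: ennreal_cases)
  case (real r)
  show ?thesis
  proof (cases "c \<le> e")
    case False
    have "ennreal c \<le> ennreal (r + e)"
      using le real \<open>0 \<le> e\<close> by (simp add: ennreal_plus[symmetric] del: ennreal_plus)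
    then have "c \<le> r + e" using real \<open>0 \<le> e\<close> by (simp add: ennreal_le_iff del: ennreal_plus)
    then show ?thesis using real by (simp add: ennreal_leI)
  qed (simp add: ennreal_neg)
qed simp

text \<open>A crude form of Le Cam's inequality: large Hellinger affinity forces large overlap.\<close>

lemma nn_integral_min_ge_half_if_affinity:
  fixes P Q :: "'a \<Rightarrow> real"
  assumes [measurable]: "P \<in> borel_measurable M" "Q \<in> borel_measurable M"
    and nonneg: "\<And>x. 0 \<le> P x" "\<And>x. 0 \<le> Q x"
    and "(\<integral>\<^sup>+ x. ennreal (P x) \<partial>M) = 1" "(\<integral>\<^sup>+ x. ennreal (Q x) \<partial>M) = 1"
    and affinity: "ennreal (19/20) \<le> (\<integral>\<^sup>+ x. ennreal (sqrt (P x * Q x)) \<partial>M)"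
  shows "ennreal (1/2) \<le> (\<integral>\<^sup>+ x. ennreal (min (P x) (Q x)) \<partial>M)"
proof -
  have pointwise: "ennreal 5 * ennreal (sqrt (P x * Q x))
      \<le> ennreal (min (P x) (Q x)) + (ennreal (17/8) * ennreal (P x) + ennreal (17/8) * ennreal (Q x))" for x
  proof -
    have "5 * (sqrt (P x) * sqrt (Q x))
        \<le> min ((sqrt (P x))\<^sup>2) ((sqrt (Q x))\<^sup>2) + 17/8 * ((sqrt (P x))\<^sup>2 + (sqrt (Q x))\<^sup>2)"
      by (rule mult_le_min_sq_add_sum_sq) (use nonneg in auto)
    then have "5 * sqrt (P x * Q x) \<le> min (P x) (Q x) + (17/8 * P x + 17/8 * Q x)"
      using nonneg[of x] by (simp add: real_sqrt_mult field_simps)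
    then have "ennreal (5 * sqrt (P x * Q x)) \<le> ennreal (min (P x) (Q x) + (17/8 * P x + 17/8 * Q x))"
      by (rule ennreal_leI)
    moreover have "ennreal 5 * ennreal (sqrt (P x * Q x)) = ennreal (5 * sqrt (P x * Q x))"
      by (subst ennreal_mult) (use nonneg[of x] in auto)
    moreover have "ennreal (min (P x) (Q x)) + (ennreal (17/8) * ennreal (P x) + ennreal (17/8) * ennreal (Q x))
        = ennreal (min (P x) (Q x) + (17/8 * P x + 17/8 * Q x))"
      using nonneg[of x] by (simp add: ennreal_mult[symmetric] ennreal_plus[symmetric] del: ennreal_plus)
    ultimately show ?thesis by simp
  qed
  have "ennreal (19/4) = ennreal 5 * ennreal (19/20)"
    by (subst ennreal_mult[symmetric]) auto
  also have "\<dots> \<le> ennreal 5 * (\<integral>\<^sup>+ x. ennreal (sqrt (P x * Q x)) \<partial>M)"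
    using affinity by (rule mult_left_mono) simp
  also have "\<dots> = (\<integral>\<^sup>+ x. ennreal 5 * ennreal (sqrt (P x * Q x)) \<partial>M)"
    by (rule nn_integral_cmult[symmetric]) measurable
  also have "\<dots> \<le> (\<integral>\<^sup>+ x. ennreal (min (P x) (Q x))
      + (ennreal (17/8) * ennreal (P x) + ennreal (17/8) * ennreal (Q x)) \<partial>M)"
    by (rule nn_integral_mono) (rule pointwise)
  also have "\<dots> = (\<integral>\<^sup>+ x. ennreal (min (P x) (Q x)) \<partial>M) + ennreal (17/4)"
    using assms(5,6)
    by (simp add: nn_integral_add nn_integral_cmult ennreal_plus[symmetric] del: ennreal_plus)
  finally have "ennreal (19/4 - 17/4) \<le> (\<integral>\<^sup>+ x. ennreal (min (P x) (Q x)) \<partial>M)"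
    by (rule ennreal_le_of_le_add_ennreal) simp
  then show ?thesis by simp
qed

lemma sum_Pow_pair_insert:
  fixes g :: "'a set \<Rightarrow> 'b::comm_monoid_add"
  assumes j: "j \<in> A" and "finite A"
  shows "(\<Sum>S\<in>Pow A. g S) = (\<Sum>S\<in>Pow (A - {j}). g S + g (insert j S))"
proof -
  have "Pow A = Pow (A - {j}) \<union> insert j ` Pow (A - {j})"
    using Pow_insert[of j "A - {j}"] j by (simp add: insert_absorb)
  moreover have "Pow (A - {j}) \<inter> insert j ` Pow (A - {j}) = {}" by auto
  moreover have "inj_on (insert j) (Pow (A - {j}))" by (auto simp: inj_on_def)
  ultimately show ?thesis
    using \<open>finite A\<close> by (simp add: sum.union_disjoint sum.reindex sum.distrib)
qed

text \<open>Choice of the number of bumps: \<open>D \<approx> (K n)^(1/(2\<beta>+1))\<close>, rounded up to an even integer.\<close>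

lemma obtain_even_resolution:
  fixes \<beta> K :: real
  assumes \<beta>: "0 < \<beta>" and K: "1 \<le> K" and n: "1 \<le> n"
  obtains D :: nat where "even D" "0 < D" "K * real n \<le> real D powr (2*\<beta> + 1)"
    "4 powr (-2*\<beta>) * K powr (-2*\<beta> / (2*\<beta> + 1)) * real n powr (- (2*\<beta> / (2*\<beta> + 1)))
       \<le> real D powr (-2*\<beta>)"
proof -
  define p where "p = 2*\<beta> + 1"
  have p: "1 < p" unfolding p_def using \<beta> by simp
  have Kn: "1 \<le> K * real n" using K n by (metis mult_mono' of_nat_1 of_nat_le_iff mult_1_left zero_le_one)
  define y where "y = (K * real n) powr (1/p)"
  have y: "1 \<le> y" unfolding y_def using Kn p by (simp add: ge_one_powr_ge_zero)
  define D where "D = 2 * nat \<lceil>y\<rceil>"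
  have "y \<le> real (nat \<lceil>y\<rceil>)" "real (nat \<lceil>y\<rceil>) \<le> y + 1" using y by linarith+
  moreover have "real D = 2 * real (nat \<lceil>y\<rceil>)" unfolding D_def by simp
  ultimately have D: "y \<le> real D" "real D \<le> 4 * y" using y by linarith+
  have "K * real n = y powr p" unfolding y_def using Kn p by (simp add: powr_powr)
  also have "\<dots> \<le> real D powr p" using D y p by (intro powr_mono2) auto
  finally have large: "K * real n \<le> real D powr (2*\<beta> + 1)" unfolding p_def .
  have "real n powr (-2*\<beta>/p) * K powr (-2*\<beta>/p) = (K * real n) powr (-2*\<beta>/p)"
    using K n by (simp add: powr_mult)
  also have "\<dots> = y powr (-2*\<beta>)"
    unfolding y_def using Kn by (simp add: powr_powr)
  finally have "4 powr (-2*\<beta>) * K powr (-2*\<beta>/p) * real n powr (-2*\<beta>/p) = 4 powr (-2*\<beta>) * y powr (-2*\<beta>)"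
    by (simp add: ac_simps)
  also have "\<dots> = (4 * y) powr (-2*\<beta>)"
    using y by (simp add: powr_mult)
  also have "\<dots> \<le> real D powr (-2*\<beta>)"
    using D y \<beta> by (intro powr_mono2') auto
  finally have "4 powr (-2*\<beta>) * K powr (-2*\<beta>/p) * real n powr (- (2*\<beta> / p)) \<le> real D powr (-2*\<beta>)"
    by (simp only: minus_divide_left mult_minus_left)
  moreover have "even D" unfolding D_def by simp
  moreover have "0 < D" using D y by simp
  ultimately show ?thesis using that large unfolding p_def by blast
qed

section \<open>The bump hypercube\<close>

locale bump_hypercube =
  fixes \<phi> \<omega> :: "real \<Rightarrow> real" and \<alpha> \<xi> \<beta> :: real and P' :: params and a b :: real
  assumes \<alpha>_pos: "0 < \<alpha>" and \<xi>_pos: "0 < \<xi>" and \<beta>_pos: "0 < \<beta>"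
    and \<phi>_measurable[measurable]: "\<phi> \<in> borel_measurable borel"
    and support_bounds: "1/4 < a" "b < 3/4" and \<phi>_support: "\<forall>x. x \<notin> {a..b} \<longrightarrow> \<phi> x = 0"
    and \<phi>_sq_integral: "(\<integral>\<^sup>+x. ennreal ((\<phi> x)\<^sup>2) \<partial>lborel) = 1"
    and Aconst_pos: "0 < Aconst \<phi> \<beta>"
    and \<omega>_plateau: "\<forall>x\<in>{- 3 * \<alpha> / 4 .. 3 * \<alpha> / 4}. \<omega> x = 2 * \<xi>"
    and hypercube_subset: "\<forall>D. even D \<and> 0 < D \<longrightarrow> Jclass \<phi> \<omega> \<alpha> \<xi> \<beta> D \<subseteq> Hclass \<beta> P'"
begin

definition amplitude :: "nat \<Rightarrow> real" where
  "amplitude D = \<xi> * real D powr (-\<beta>) / Aconst \<phi> \<beta>"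

definition rescale :: "nat \<Rightarrow> nat \<Rightarrow> real \<Rightarrow> real" where
  "rescale D j x = real D / \<alpha> * (x + \<alpha> / 2) - (real j - 1)"

definition bump :: "nat \<Rightarrow> nat \<Rightarrow> real \<Rightarrow> real" where
  "bump D j x = amplitude D * \<phi> (rescale D j x)"

text \<open>The vertex \<open>\<theta>\<close> of the hypercube is encoded by \<open>S = {j. \<theta> j}\<close>.\<close>

definition vertex_density :: "nat \<Rightarrow> nat set \<Rightarrow> real \<Rightarrow> real" where
  "vertex_density D S x = \<omega> x + (\<Sum>j=1..D. (if j \<in> S then 1 else -1) * bump D j x)"

lemma rescale_measurable[measurable]: "rescale D j \<in> borel_measurable borel"
  unfolding rescale_def by measurable

lemma bump_measurable[measurable]: "bump D j \<in> borel_measurable borel"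
  unfolding bump_def by measurable

lemma bump_eq_phij: "bump D j = phij \<phi> \<alpha> \<xi> \<beta> D j"
  by (rule ext) (simp add: bump_def phij_def amplitude_def rescale_def)

lemma vertex_density_in_Hclass:
  assumes "even D" "0 < D" shows "vertex_density D S \<in> Hclass \<beta> P'"
proof -
  have "vertex_density D S \<in> Jclass \<phi> \<omega> \<alpha> \<xi> \<beta> D"
    unfolding Jclass_def
    by (rule CollectI, rule exI[of _ "\<lambda>j. j \<in> S"])
       (simp add: fun_eq_iff vertex_density_def bump_eq_phij[symmetric])
  then show ?thesis using hypercube_subset assms by blast
qed

lemma
  assumes "even D" "0 < D"
  shows vertex_density_pos: "0 < vertex_density D S x"
    and vertex_density_integral: "(\<integral>\<^sup>+ x. ennreal (vertex_density D S x) \<partial>lborel) = 1"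
  using vertex_density_in_Hclass[OF assms]
  unfolding Hclass_def is_density_def Let_def by auto

lemma \<omega>_measurable[measurable]: "\<omega> \<in> borel_measurable borel"
proof -
  have "vertex_density 2 {} \<in> borel_measurable borel"
    using vertex_density_in_Hclass[of 2 "{}"] unfolding Hclass_def is_density_def by auto
  then have "(\<lambda>x. vertex_density 2 {} x + (\<Sum>j=1..2. bump 2 j x)) \<in> borel_measurable borel"
    by measurable
  then show ?thesis by (simp add: vertex_density_def sum_negf)
qed

lemma vertex_density_measurable[measurable]: "vertex_density D S \<in> borel_measurable borel"
  unfolding vertex_density_def by measurable

lemma bump_nonzero:
  assumes D: "0 < D" and j: "j \<in> {1..D}" and nonzero: "bump D j x \<noteq> 0"
  shows bump_nonzero_plateau: "\<omega> x = 2 * \<xi>"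
    and bump_nonzero_others: "\<And>k. k \<noteq> j \<Longrightarrow> bump D k x = 0"
proof -
  have "\<phi> (rescale D j x) \<noteq> 0" using nonzero by (auto simp: bump_def)
  then have t: "a \<le> rescale D j x" "rescale D j x \<le> b" using \<phi>_support by auto
  have Dp: "0 < real D" using D by simp
  have x: "x + \<alpha>/2 = \<alpha> / real D * (rescale D j x + real j - 1)"
    using Dp \<alpha>_pos by (simp add: rescale_def field_simps)
  have "0 < rescale D j x + real j - 1" "rescale D j x + real j - 1 < real D"
    using t support_bounds j by auto
  then have "0 < x + \<alpha>/2" "x + \<alpha>/2 < \<alpha> / real D * real D"
    unfolding x using Dp \<alpha>_pos by (simp, intro mult_strict_left_mono) auto
  then have "x \<in> {- 3 * \<alpha> / 4 .. 3 * \<alpha> / 4}" using Dp \<alpha>_pos by auto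
  then show "\<omega> x = 2 * \<xi>" using \<omega>_plateau by auto
  fix k assume "k \<noteq> j"
  show "bump D k x = 0"
  proof (rule ccontr)
    assume "bump D k x \<noteq> 0"
    then have "\<phi> (rescale D k x) \<noteq> 0" by (auto simp: bump_def)
    then have "a \<le> rescale D k x" "rescale D k x \<le> b" using \<phi>_support by auto
    moreover have "rescale D k x = rescale D j x + (real j - real k)" by (simp add: rescale_def)
    ultimately have "\<bar>real j - real k\<bar> < 1" using t support_bounds by linarith
    then show False using \<open>k \<noteq> j\<close> by linarith
  qed
qed

lemma vertex_density_on_bump:
  assumes D: "0 < D" and j: "j \<in> {1..D}" and nonzero: "bump D j x \<noteq> 0"
  shows "vertex_density D S x = 2 * \<xi> + (if j \<in> S then 1 else -1) * bump D j x"
proof -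
  have "(\<Sum>k=1..D. (if k \<in> S then 1 else -1) * bump D k x)
      = (if j \<in> S then 1 else -1) * bump D j x
        + (\<Sum>k\<in>{1..D}-{j}. (if k \<in> S then 1 else -1) * bump D k x)"
    using j by (subst sum.remove) auto
  also have "(\<Sum>k\<in>{1..D}-{j}. (if k \<in> S then 1 else -1) * bump D k x) = 0"
    using bump_nonzero_others[OF D j nonzero] by (intro sum.neutral) auto
  finally show ?thesis using bump_nonzero_plateau[OF D j nonzero] by (simp add: vertex_density_def)
qed

lemma vertex_density_insert:
  assumes j: "j \<in> {1..D}" and "j \<notin> S"
  shows "vertex_density D (insert j S) x = vertex_density D S x + 2 * bump D j x"
proof -
  have "(\<Sum>k=1..D. (if k \<in> insert j S then 1 else -1) * bump D k x)
      = bump D j x + (\<Sum>k\<in>{1..D}-{j}. (if k \<in> insert j S then 1 else -1) * bump D k x)"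
    using j by (subst sum.remove) auto
  moreover have "(\<Sum>k=1..D. (if k \<in> S then 1 else -1) * bump D k x)
      = - bump D j x + (\<Sum>k\<in>{1..D}-{j}. (if k \<in> S then 1 else -1) * bump D k x)"
    using assms by (subst sum.remove) auto
  moreover have "(\<Sum>k\<in>{1..D}-{j}. (if k \<in> insert j S then 1 else -1) * bump D k x)
      = (\<Sum>k\<in>{1..D}-{j}. (if k \<in> S then 1 else -1) * bump D k x)"
    by (intro sum.cong) auto
  ultimately show ?thesis by (simp add: vertex_density_def)
qed

lemma bump_sq_integral:
  assumes D: "0 < D"
  shows "(\<integral>\<^sup>+ x. ennreal ((bump D j x)\<^sup>2) \<partial>lborel) = ennreal ((amplitude D)\<^sup>2 * \<alpha> / real D)"
proof -
  have Dp: "0 < real D" using D by simp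
  have "(1::ennreal) = (\<integral>\<^sup>+x. ennreal ((\<phi> x)\<^sup>2) \<partial>lborel)" using \<phi>_sq_integral by simp
  also have "\<dots> = ennreal \<bar>real D / \<alpha>\<bar>
      * (\<integral>\<^sup>+x. ennreal ((\<phi> (real D / 2 - (real j - 1) + real D / \<alpha> * x))\<^sup>2) \<partial>lborel)"
    using Dp \<alpha>_pos by (intro nn_integral_real_affine) auto
  also have "(\<lambda>x. real D / 2 - (real j - 1) + real D / \<alpha> * x) = rescale D j"
    using \<alpha>_pos by (auto simp: fun_eq_iff rescale_def field_simps)
  finally have "1 = ennreal (real D / \<alpha>) * (\<integral>\<^sup>+x. ennreal ((\<phi> (rescale D j x))\<^sup>2) \<partial>lborel)"
    using Dp \<alpha>_pos by simp
  then have "ennreal (\<alpha> / real D) = ennreal (\<alpha> / real D) * ennreal (real D / \<alpha>)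
      * (\<integral>\<^sup>+x. ennreal ((\<phi> (rescale D j x))\<^sup>2) \<partial>lborel)"
    by (simp add: mult.assoc)
  also have "ennreal (\<alpha> / real D) * ennreal (real D / \<alpha>) = 1"
    using Dp \<alpha>_pos by (simp add: ennreal_mult[symmetric])
  finally have rescaled: "(\<integral>\<^sup>+x. ennreal ((\<phi> (rescale D j x))\<^sup>2) \<partial>lborel) = ennreal (\<alpha> / real D)"
    by simp
  have "(\<integral>\<^sup>+ x. ennreal ((bump D j x)\<^sup>2) \<partial>lborel)
      = (\<integral>\<^sup>+ x. ennreal ((amplitude D)\<^sup>2) * ennreal ((\<phi> (rescale D j x))\<^sup>2) \<partial>lborel)"
    by (intro nn_integral_cong) (simp add: bump_def power_mult_distrib ennreal_mult[symmetric])
  also have "\<dots> = ennreal ((amplitude D)\<^sup>2) * ennreal (\<alpha> / real D)"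
    by (subst nn_integral_cmult) (auto simp: rescaled)
  also have "\<dots> = ennreal ((amplitude D)\<^sup>2 * \<alpha> / real D)"
    using Dp \<alpha>_pos by (simp add: ennreal_mult[symmetric])
  finally show ?thesis .
qed

text \<open>By \<open>bump_sq_integral\<close> these are \<open>\<integral>bump\<^sup>2/(2\<xi>)\<close> and \<open>\<integral>bump\<^sup>2/(8\<xi>)\<close>.\<close>

definition affinity_defect :: "nat \<Rightarrow> real" where
  "affinity_defect D = (amplitude D)\<^sup>2 * \<alpha> / (2 * \<xi> * real D)"

definition separation :: "nat \<Rightarrow> real" where
  "separation D = (amplitude D)\<^sup>2 * \<alpha> / (8 * \<xi> * real D)"

lemma neighbour_densities_on_bump:
  assumes D: "even D" "0 < D" and j: "j \<in> {1..D}" "j \<notin> S" and nonzero: "bump D j x \<noteq> 0"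
  shows "vertex_density D S x = 2 * \<xi> - bump D j x"
    and "vertex_density D (insert j S) x = 2 * \<xi> + bump D j x"
  using vertex_density_on_bump[OF D(2) j(1) nonzero, of S]
    vertex_density_on_bump[OF D(2) j(1) nonzero, of "insert j S"] j by simp_all

lemma neighbour_mean_le:
  assumes D: "even D" "0 < D" and j: "j \<in> {1..D}" "j \<notin> S"
  shows "(vertex_density D S x + vertex_density D (insert j S) x) / 2
    \<le> sqrt (vertex_density D S x * vertex_density D (insert j S) x) + (bump D j x)\<^sup>2 / (2 * \<xi>)"
proof (cases "bump D j x = 0")
  case True
  then show ?thesis
    using vertex_density_insert[OF j] vertex_density_pos[OF D, of S x] \<xi>_pos by simp
next
  case False
  let ?f = "vertex_density D S x" and ?g = "vertex_density D (insert j S) x" and ?u = "bump D j x"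
  have pos: "0 \<le> ?f" "0 \<le> ?g" using vertex_density_pos[OF D] by (simp_all add: less_imp_le)
  have "(sqrt ?f - sqrt ?g)\<^sup>2 * (?f + ?g) \<le> (?f - ?g)\<^sup>2" by (rule sqrt_diff_sq_mult_add_le[OF pos])
  then have "(sqrt ?f - sqrt ?g)\<^sup>2 * (4 * \<xi>) \<le> 4 * ?u\<^sup>2"
    unfolding neighbour_densities_on_bump[OF D j False] by (simp add: power2_eq_square algebra_simps)
  then have "(sqrt ?f - sqrt ?g)\<^sup>2 \<le> ?u\<^sup>2 / \<xi>" using \<xi>_pos by (simp add: field_simps)
  then show ?thesis using sqrt_diff_sq_eq[OF pos] by (simp add: field_simps)
qed

lemma neighbour_affinity_ge:
  assumes D: "even D" "0 < D" and j: "j \<in> {1..D}" "j \<notin> S"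
  shows "ennreal (1 - affinity_defect D)
    \<le> (\<integral>\<^sup>+x. ennreal (sqrt (vertex_density D S x * vertex_density D (insert j S) x)) \<partial>lborel)"
proof (rule ennreal_le_of_le_add_ennreal)
  let ?f = "vertex_density D S" and ?g = "vertex_density D (insert j S)"
  have pos: "\<And>x. 0 \<le> ?f x" "\<And>x. 0 \<le> ?g x" using vertex_density_pos[OF D] by (simp_all add: less_imp_le)
  have total: "(\<integral>\<^sup>+ x. ennreal (?f x) + ennreal (?g x) \<partial>lborel) = ennreal 2"
    by (simp add: nn_integral_add vertex_density_integral[OF D])
  have "ennreal 1 = ennreal (1/2) * ennreal 2"
    by (subst ennreal_mult[symmetric]) auto
  also have "\<dots> = ennreal (1/2) * (\<integral>\<^sup>+ x. ennreal (?f x) + ennreal (?g x) \<partial>lborel)"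
    by (simp only: total)
  also have "\<dots> = (\<integral>\<^sup>+ x. ennreal (1/2) * (ennreal (?f x) + ennreal (?g x)) \<partial>lborel)"
    by (rule nn_integral_cmult[symmetric]) simp
  also have "\<dots> = (\<integral>\<^sup>+ x. ennreal ((?f x + ?g x) / 2) \<partial>lborel)"
  proof (rule nn_integral_cong)
    fix x
    have "ennreal (?f x) + ennreal (?g x) = ennreal (?f x + ?g x)"
      by (rule ennreal_plus[symmetric]) (use pos in auto)
    moreover have "ennreal (1/2) * ennreal (?f x + ?g x) = ennreal ((?f x + ?g x) / 2)"
      by (subst ennreal_mult[symmetric]) (use pos in auto)
    ultimately show "ennreal (1/2) * (ennreal (?f x) + ennreal (?g x)) = ennreal ((?f x + ?g x) / 2)"
      by (simp only:)
  qed
  also have "\<dots> \<le> (\<integral>\<^sup>+ x. ennreal (sqrt (?f x * ?g x)) + ennreal (1 / (2 * \<xi>)) * ennreal ((bump D j x)\<^sup>2) \<partial>lborel)"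
    using neighbour_mean_le[OF D j] pos \<xi>_pos
    by (intro nn_integral_mono)
       (simp add: ennreal_mult[symmetric] ennreal_plus[symmetric] ennreal_leI del: ennreal_plus)
  also have "\<dots> = (\<integral>\<^sup>+ x. ennreal (sqrt (?f x * ?g x)) \<partial>lborel)
      + ennreal (1 / (2 * \<xi>)) * (\<integral>\<^sup>+ x. ennreal ((bump D j x)\<^sup>2) \<partial>lborel)"
    by (simp add: nn_integral_add nn_integral_cmult)
  also have "ennreal (1 / (2 * \<xi>)) * (\<integral>\<^sup>+ x. ennreal ((bump D j x)\<^sup>2) \<partial>lborel) = ennreal (affinity_defect D)"
    unfolding bump_sq_integral[OF D(2)] affinity_defect_def using \<xi>_pos \<alpha>_pos
    by (subst ennreal_mult[symmetric]) (auto simp: field_simps)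
  finally show "ennreal 1 \<le> (\<integral>\<^sup>+ x. ennreal (sqrt (?f x * ?g x)) \<partial>lborel) + ennreal (affinity_defect D)" .
  show "0 \<le> affinity_defect D" unfolding affinity_defect_def using \<xi>_pos \<alpha>_pos by simp
qed

definition bump_support :: "nat \<Rightarrow> nat \<Rightarrow> real set" where
  "bump_support D j = {x. bump D j x \<noteq> 0}"

definition local_loss :: "nat \<Rightarrow> nat \<Rightarrow> nat set \<Rightarrow> (real \<Rightarrow> real) \<Rightarrow> ennreal" where
  "local_loss D j S h = (\<integral>\<^sup>+x. ennreal (indicator (bump_support D j) x
     * ((sqrt (vertex_density D S x) - sqrt (h x))\<^sup>2 / 2)) \<partial>lborel)"

lemma bump_support_measurable[measurable]: "bump_support D j \<in> sets borel"
  unfolding bump_support_def by measurable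

lemma neighbour_separation_pointwise:
  assumes D: "even D" "0 < D" and j: "j \<in> {1..D}" "j \<notin> S" and "0 \<le> y"
  shows "(bump D j x)\<^sup>2 / (8 * \<xi>)
    \<le> indicator (bump_support D j) x * ((sqrt (vertex_density D S x) - sqrt y)\<^sup>2 / 2)
      + indicator (bump_support D j) x * ((sqrt (vertex_density D (insert j S) x) - sqrt y)\<^sup>2 / 2)"
proof (cases "bump D j x = 0")
  case False
  let ?f = "vertex_density D S x" and ?g = "vertex_density D (insert j S) x" and ?u = "bump D j x"
  have pos: "0 \<le> ?f" "0 \<le> ?g" using vertex_density_pos[OF D] by (simp_all add: less_imp_le)
  have "(?f - ?g)\<^sup>2 \<le> 2 * (?f + ?g) * (sqrt ?f - sqrt ?g)\<^sup>2" by (rule diff_sq_le_sqrt_diff_sq[OF pos])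
  then have "?u\<^sup>2 \<le> 2 * \<xi> * (sqrt ?f - sqrt ?g)\<^sup>2"
    unfolding neighbour_densities_on_bump[OF D j False] by (simp add: power2_eq_square algebra_simps)
  also have "\<dots> \<le> 2 * \<xi> * (2 * ((sqrt ?f - sqrt y)\<^sup>2 + (sqrt ?g - sqrt y)\<^sup>2))"
    using \<xi>_pos by (intro mult_left_mono diff_sq_le_twice_sum_diff_sq) simp
  moreover have "indicator (bump_support D j) x = (1::real)" using False by (simp add: bump_support_def)
  ultimately show ?thesis using \<xi>_pos by (simp add: field_simps)
qed (simp add: bump_support_def)

lemma neighbour_separation:
  assumes D: "even D" "0 < D" and j: "j \<in> {1..D}" "j \<notin> S"
    and [measurable]: "h \<in> borel_measurable borel" and nonneg: "\<And>x. 0 \<le> h x"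
  shows "ennreal (separation D) \<le> local_loss D j S h + local_loss D j (insert j S) h"
proof -
  have "ennreal (separation D) = ennreal (1 / (8 * \<xi>)) * (\<integral>\<^sup>+ x. ennreal ((bump D j x)\<^sup>2) \<partial>lborel)"
    unfolding bump_sq_integral[OF D(2)] separation_def using \<xi>_pos \<alpha>_pos
    by (subst ennreal_mult[symmetric]) (auto simp: field_simps)
  also have "\<dots> = (\<integral>\<^sup>+ x. ennreal ((bump D j x)\<^sup>2 / (8 * \<xi>)) \<partial>lborel)"
    using \<xi>_pos by (simp add: nn_integral_cmult[symmetric] ennreal_mult[symmetric])
  also have "\<dots> \<le> (\<integral>\<^sup>+ x. ennreal (indicator (bump_support D j) x * ((sqrt (vertex_density D S x) - sqrt (h x))\<^sup>2 / 2))
      + ennreal (indicator (bump_support D j) x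
          * ((sqrt (vertex_density D (insert j S) x) - sqrt (h x))\<^sup>2 / 2)) \<partial>lborel)"
    using neighbour_separation_pointwise[OF D j nonneg]
    by (intro nn_integral_mono) (simp add: ennreal_plus[symmetric] ennreal_leI del: ennreal_plus)
  also have "\<dots> = local_loss D j S h + local_loss D j (insert j S) h"
    unfolding local_loss_def by (rule nn_integral_add) auto
  finally show ?thesis .
qed

lemma sum_local_loss_le_hellinger_sq:
  assumes D: "0 < D" and [measurable]: "h \<in> borel_measurable borel"
  shows "(\<Sum>j=1..D. local_loss D j S h) \<le> hellinger_sq (vertex_density D S) h"
proof -
  have disjoint: "(\<Sum>j=1..D. indicator (bump_support D j) x) \<le> (1::real)" for x
  proof (cases "\<exists>j\<in>{1..D}. x \<in> bump_support D j")
    case True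
    then obtain j where j: "j \<in> {1..D}" "bump D j x \<noteq> 0" by (auto simp: bump_support_def)
    have "(\<Sum>k=1..D. indicator (bump_support D k) x)
        = indicator (bump_support D j) x + (\<Sum>k\<in>{1..D}-{j}. indicator (bump_support D k) x :: real)"
      using j by (subst sum.remove) auto
    also have "(\<Sum>k\<in>{1..D}-{j}. indicator (bump_support D k) x :: real) = 0"
      using bump_nonzero_others[OF D j] by (intro sum.neutral) (auto simp: bump_support_def)
    finally show ?thesis by simp
  qed simp
  have "(\<Sum>j=1..D. local_loss D j S h) = (\<integral>\<^sup>+x. (\<Sum>j=1..D. ennreal (indicator (bump_support D j) x
      * ((sqrt (vertex_density D S x) - sqrt (h x))\<^sup>2 / 2))) \<partial>lborel)"
    unfolding local_loss_def by (rule nn_integral_sum[symmetric]) auto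
  also have "\<dots> \<le> (\<integral>\<^sup>+x. ennreal ((sqrt (vertex_density D S x) - sqrt (h x))\<^sup>2 / 2) \<partial>lborel)"
  proof (rule nn_integral_mono)
    fix x
    let ?g = "(sqrt (vertex_density D S x) - sqrt (h x))\<^sup>2 / 2"
    have "(\<Sum>j=1..D. indicator (bump_support D j) x * ?g) \<le> 1 * ?g"
      unfolding sum_distrib_right[symmetric] by (rule mult_right_mono[OF disjoint]) simp
    then show "(\<Sum>j=1..D. ennreal (indicator (bump_support D j) x * ?g)) \<le> ennreal ?g"
      by (simp add: sum_ennreal ennreal_leI)
  qed
  finally show ?thesis unfolding hellinger_sq_def .
qed

end

section \<open>Two-point bounds and Assouad's lemma\<close>

lemma estimator_measurable:
  assumes "est \<in> estimators n"
  shows estimator_joint_measurable: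
      "(\<lambda>p. est (fst p) (snd p)) \<in> borel_measurable (PiM {..<n} (\<lambda>_. lborel) \<Otimes>\<^sub>M lborel)"
    and estimator_nonneg: "0 \<le> est X x"
  using assms unfolding estimators_def by (auto simp: case_prod_beta')

lemma estimator_section_measurable:
  assumes "est \<in> estimators n" and X: "X \<in> space (PiM {..<n} (\<lambda>_. lborel :: real measure))"
  shows "est X \<in> borel_measurable borel"
  using measurable_Pair2[OF estimator_joint_measurable[OF assms(1)] X] by simp

context bump_hypercube
begin

definition likelihood :: "nat \<Rightarrow> nat \<Rightarrow> nat set \<Rightarrow> (nat \<Rightarrow> real) \<Rightarrow> real" where
  "likelihood n D S X = (\<Prod>i<n. vertex_density D S (X i))"

definition sample_law :: "nat \<Rightarrow> nat \<Rightarrow> nat set \<Rightarrow> (nat \<Rightarrow> real) measure" where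
  "sample_law n D S = PiM {..<n} (\<lambda>_. density lborel (\<lambda>x. ennreal (vertex_density D S x)))"

lemma likelihood_measurable[measurable]:
  "likelihood n D S \<in> borel_measurable (PiM {..<n} (\<lambda>_. lborel))"
  unfolding likelihood_def by measurable

lemma likelihood_nonneg: "even D \<Longrightarrow> 0 < D \<Longrightarrow> 0 \<le> likelihood n D S X"
  unfolding likelihood_def by (intro prod_nonneg) (simp add: vertex_density_pos less_imp_le)

lemma likelihood_integral:
  assumes D: "even D" "0 < D"
  shows "(\<integral>\<^sup>+ X. ennreal (likelihood n D S X) \<partial>PiM {..<n} (\<lambda>_. lborel)) = 1"
  unfolding likelihood_def using vertex_density_pos[OF D] vertex_density_integral[OF D]
  by (subst nn_integral_PiM_lborel_prod) (auto intro: less_imp_le)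

lemma nn_integral_sample_law:
  assumes D: "even D" "0 < D" and [measurable]: "g \<in> borel_measurable (PiM {..<n} (\<lambda>_. lborel))"
  shows "(\<integral>\<^sup>+X. g X \<partial>sample_law n D S) = (\<integral>\<^sup>+X. ennreal (likelihood n D S X) * g X \<partial>PiM {..<n} (\<lambda>_. lborel))"
proof -
  have "sample_law n D S = density (PiM {..<n} (\<lambda>_. lborel)) (\<lambda>X. ennreal (likelihood n D S X))"
    unfolding sample_law_def likelihood_def
    using vertex_density_pos[OF D] vertex_density_integral[OF D]
    by (intro PiM_density_lborel) (auto intro: less_imp_le)
  then show ?thesis by (simp add: nn_integral_density)
qed

lemma sets_sample_law: "sets (sample_law n D S) = sets (PiM {..<n} (\<lambda>_. lborel))"
  unfolding sample_law_def by (rule sets_PiM_cong) auto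

lemma local_loss_estimator_measurable[measurable]:
  assumes "est \<in> estimators n"
  shows "(\<lambda>X. local_loss D j S (est X)) \<in> borel_measurable (PiM {..<n} (\<lambda>_. lborel))"
proof -
  note [measurable] = estimator_joint_measurable[OF assms]
  have "(\<lambda>p. ennreal (indicator (bump_support D j) (snd p)
      * ((sqrt (vertex_density D S (snd p)) - sqrt (est (fst p) (snd p)))\<^sup>2 / 2)))
      \<in> borel_measurable (PiM {..<n} (\<lambda>_. lborel) \<Otimes>\<^sub>M lborel)"
    by measurable
  then show ?thesis unfolding local_loss_def
    by (intro lborel.borel_measurable_nn_integral) (simp add: case_prod_beta')
qed

text \<open>The affinity of product laws is the \<open>n\<close>-th power of the affinity of the marginals.\<close>

lemma neighbour_likelihood_affinity:
  assumes D: "even D" "0 < D" and j: "j \<in> {1..D}" "j \<notin> S"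
    and small: "real n * affinity_defect D \<le> 1/20"
  shows "ennreal (19/20) \<le> (\<integral>\<^sup>+ X. ennreal (sqrt (likelihood n D S X * likelihood n D (insert j S) X))
           \<partial>PiM {..<n} (\<lambda>_. lborel))"
proof -
  have defect: "0 \<le> affinity_defect D" unfolding affinity_defect_def using \<xi>_pos \<alpha>_pos by simp
  have "ennreal (19/20) \<le> ennreal (1 - affinity_defect D) ^ n"
  proof (cases "n = 0")
    case False
    then have "1 * affinity_defect D \<le> real n * affinity_defect D"
      using defect by (intro mult_right_mono) auto
    then have "affinity_defect D \<le> 1/20" using small by simp
    then have "1 + real n * (- affinity_defect D) \<le> (1 + - affinity_defect D) ^ n"
      by (intro Bernoulli_inequality) simp
    then have "19/20 \<le> (1 - affinity_defect D) ^ n" using small by simp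
    then have "ennreal (19/20) \<le> ennreal ((1 - affinity_defect D) ^ n)" by (rule ennreal_leI)
    then show ?thesis using \<open>affinity_defect D \<le> 1/20\<close> by (simp add: ennreal_power)
  qed simp
  also have "\<dots> \<le> (\<integral>\<^sup>+ x. ennreal (sqrt (vertex_density D S x * vertex_density D (insert j S) x)) \<partial>lborel) ^ n"
    by (intro power_mono neighbour_affinity_ge[OF D j]) simp
  also have "\<dots> = (\<integral>\<^sup>+ X. ennreal (\<Prod>i<n. sqrt (vertex_density D S (X i) * vertex_density D (insert j S) (X i)))
      \<partial>PiM {..<n} (\<lambda>_. lborel))"
    using vertex_density_pos[OF D] by (intro nn_integral_PiM_lborel_prod[symmetric]) (auto intro: less_imp_le)
  also have "\<dots> = (\<integral>\<^sup>+ X. ennreal (sqrt (likelihood n D S X * likelihood n D (insert j S) X))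
      \<partial>PiM {..<n} (\<lambda>_. lborel))"
    by (simp add: likelihood_def prod.distrib[symmetric] real_sqrt_prod)
  finally show ?thesis .
qed

lemma neighbour_pair_risk:
  assumes D: "even D" "0 < D" and j: "j \<in> {1..D}" "j \<notin> S"
    and small: "real n * affinity_defect D \<le> 1/20" and est: "est \<in> estimators n"
  shows "ennreal (separation D / 2)
    \<le> (\<integral>\<^sup>+X. local_loss D j S (est X) \<partial>sample_law n D S)
      + (\<integral>\<^sup>+X. local_loss D j (insert j S) (est X) \<partial>sample_law n D (insert j S))"
proof -
  let ?M = "PiM {..<n} (\<lambda>_. lborel :: real measure)"
  let ?P = "likelihood n D S" and ?Q = "likelihood n D (insert j S)"
  let ?L = "\<lambda>S X. local_loss D j S (est X)"
  note [measurable] = local_loss_estimator_measurable[OF est]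
  have "0 \<le> separation D" unfolding separation_def using \<xi>_pos \<alpha>_pos by simp
  then have "ennreal (separation D / 2) = ennreal (1/2) * ennreal (separation D)"
    by (subst ennreal_mult[symmetric]) auto
  also have "\<dots> \<le> (\<integral>\<^sup>+ X. ennreal (min (?P X) (?Q X)) \<partial>?M) * ennreal (separation D)"
    using likelihood_nonneg[OF D] likelihood_integral[OF D]
    by (intro mult_right_mono nn_integral_min_ge_half_if_affinity neighbour_likelihood_affinity[OF D j small])
       auto
  also have "\<dots> = (\<integral>\<^sup>+ X. ennreal (min (?P X) (?Q X)) * ennreal (separation D) \<partial>?M)"
    by (rule nn_integral_multc[symmetric]) measurable
  also have "\<dots> \<le> (\<integral>\<^sup>+ X. ennreal (?P X) * ?L S X + ennreal (?Q X) * ?L (insert j S) X \<partial>?M)"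
  proof (rule nn_integral_mono)
    fix X assume "X \<in> space ?M"
    then have "ennreal (separation D) \<le> ?L S X + ?L (insert j S) X"
      using est by (intro neighbour_separation[OF D j] estimator_section_measurable estimator_nonneg)
    then have "ennreal (min (?P X) (?Q X)) * ennreal (separation D)
        \<le> ennreal (min (?P X) (?Q X)) * ?L S X + ennreal (min (?P X) (?Q X)) * ?L (insert j S) X"
      by (metis distrib_left mult_left_mono zero_le)
    also have "\<dots> \<le> ennreal (?P X) * ?L S X + ennreal (?Q X) * ?L (insert j S) X"
      by (intro add_mono mult_right_mono ennreal_leI) auto
    finally show "ennreal (min (?P X) (?Q X)) * ennreal (separation D)
        \<le> ennreal (?P X) * ?L S X + ennreal (?Q X) * ?L (insert j S) X" .
  qed
  also have "\<dots> = (\<integral>\<^sup>+X. ?L S X \<partial>sample_law n D S) + (\<integral>\<^sup>+X. ?L (insert j S) X \<partial>sample_law n D (insert j S))"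
    by (simp add: nn_integral_add nn_integral_sample_law[OF D])
  finally show ?thesis .
qed

lemma sum_local_risk_le_risk:
  assumes D: "0 < D" and est: "est \<in> estimators n"
  shows "(\<Sum>j=1..D. \<integral>\<^sup>+X. local_loss D j S (est X) \<partial>sample_law n D S) \<le> risk n (vertex_density D S) est"
proof -
  have [measurable]: "(\<lambda>X. local_loss D j S (est X)) \<in> borel_measurable (sample_law n D S)" for j
    using local_loss_estimator_measurable[OF est] by (simp add: measurable_cong_sets[OF sets_sample_law refl])
  have "(\<Sum>j=1..D. \<integral>\<^sup>+X. local_loss D j S (est X) \<partial>sample_law n D S)
      = (\<integral>\<^sup>+X. (\<Sum>j=1..D. local_loss D j S (est X)) \<partial>sample_law n D S)"
    by (rule nn_integral_sum[symmetric]) auto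
  also have "\<dots> \<le> (\<integral>\<^sup>+X. hellinger_sq (vertex_density D S) (est X) \<partial>sample_law n D S)"
  proof (rule nn_integral_mono)
    fix X assume "X \<in> space (sample_law n D S)"
    then have "X \<in> space (PiM {..<n} (\<lambda>_. lborel :: real measure))"
      using sets_eq_imp_space_eq[OF sets_sample_law] by blast
    then show "(\<Sum>j=1..D. local_loss D j S (est X)) \<le> hellinger_sq (vertex_density D S) (est X)"
      by (intro sum_local_loss_le_hellinger_sq[OF D] estimator_section_measurable[OF est])
  qed
  finally show ?thesis unfolding risk_def sample_law_def .
qed

text \<open>Assouad's lemma: average the two-point bounds over all \<open>2^D\<close> vertices and all \<open>D\<close> coordinates.\<close>

lemma assouad_bound:
  assumes D: "even D" "0 < D" and small: "real n * affinity_defect D \<le> 1/20"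
    and est: "est \<in> estimators n"
  shows "ennreal (real D * separation D / 4) \<le> (SUP s\<in>Hclass \<beta> P'. risk n s est)"
proof -
  let ?sup = "SUP s\<in>Hclass \<beta> P'. risk n s est"
  let ?E = "\<lambda>S j. \<integral>\<^sup>+X. local_loss D j S (est X) \<partial>sample_law n D S"
  have per_coordinate: "of_nat (2 ^ (D - 1)) * ennreal (separation D / 2) \<le> (\<Sum>S\<in>Pow {1..D}. ?E S j)"
    if j: "j \<in> {1..D}" for j
  proof -
    have "of_nat (2 ^ (D - 1)) * ennreal (separation D / 2) = (\<Sum>S\<in>Pow ({1..D} - {j}). ennreal (separation D / 2))"
      using j by (simp add: card_Pow)
    also have "\<dots> \<le> (\<Sum>S\<in>Pow ({1..D} - {j}). ?E S j + ?E (insert j S) j)"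
      using j by (intro sum_mono neighbour_pair_risk[OF D _ _ small est]) auto
    also have "\<dots> = (\<Sum>S\<in>Pow {1..D}. ?E S j)"
      by (rule sum_Pow_pair_insert[symmetric, OF j]) simp
    finally show ?thesis .
  qed
  have "of_nat (2 ^ D) * ennreal (real D * separation D / 4)
      = (\<Sum>j=1..D. of_nat (2 ^ (D - 1)) * ennreal (separation D / 2))"
  proof -
    have "(2::real) ^ D = 2 * 2 ^ (D - 1)" using D(2) by (cases D) auto
    moreover have "0 \<le> separation D" unfolding separation_def using \<xi>_pos \<alpha>_pos by simp
    ultimately show ?thesis
      by (simp add: ennreal_mult[symmetric] ennreal_of_nat_eq_real_of_nat field_simps)
  qed
  also have "\<dots> \<le> (\<Sum>j=1..D. \<Sum>S\<in>Pow {1..D}. ?E S j)"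
    by (rule sum_mono) (rule per_coordinate)
  also have "\<dots> = (\<Sum>S\<in>Pow {1..D}. \<Sum>j=1..D. ?E S j)"
    by (rule sum.swap)
  also have "\<dots> \<le> (\<Sum>S\<in>Pow {1..D}. ?sup)"
    using D by (intro sum_mono order_trans[OF sum_local_risk_le_risk[OF _ est]] SUP_upper
        vertex_density_in_Hclass) auto
  also have "\<dots> = of_nat (2 ^ D) * ?sup"
    by (simp add: card_Pow)
  finally show ?thesis by (subst (asm) ennreal_mult_le_mult_iff) (auto simp: power_eq_top_ennreal)
qed

lemma amplitude_sq: "0 < D \<Longrightarrow> (amplitude D)\<^sup>2 = \<xi>\<^sup>2 / (Aconst \<phi> \<beta>)\<^sup>2 * real D powr (-2*\<beta>)"
  unfolding amplitude_def
  by (simp add: power_divide power_mult_distrib powr_realpow[symmetric] powr_powr[symmetric]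
      power2_eq_square powr_add[symmetric])

lemma affinity_defect_eq:
  assumes "0 < D" shows "affinity_defect D = \<xi> * \<alpha> / (2 * (Aconst \<phi> \<beta>)\<^sup>2) / real D powr (2*\<beta> + 1)"
proof -
  have "real D powr (-2*\<beta>) / real D = 1 / real D powr (2*\<beta> + 1)"
    using assms by (simp add: powr_add powr_minus divide_simps)
  moreover have "affinity_defect D = \<xi> * \<alpha> / (2 * (Aconst \<phi> \<beta>)\<^sup>2) * (real D powr (-2*\<beta>) / real D)"
    unfolding affinity_defect_def amplitude_sq[OF assms] using \<xi>_pos by (simp add: power2_eq_square field_simps)
  ultimately show ?thesis by simp
qed

lemma separation_eq:
  "0 < D \<Longrightarrow> real D * separation D / 4 = \<xi> * \<alpha> / (32 * (Aconst \<phi> \<beta>)\<^sup>2) * real D powr (-2*\<beta>)"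
  unfolding separation_def amplitude_sq using \<xi>_pos by (simp add: power2_eq_square field_simps)

text \<open>With \<open>D\<close> of order \<open>n^(1/(2\<beta>+1))\<close> the hypotheses of Assouad's lemma hold and
  \<open>D \<cdot> separation D\<close> is of order \<open>D^(-2\<beta>) \<approx> n^(-2\<beta>/(2\<beta>+1))\<close>.\<close>

lemma minimax_lower_bound:
  "\<exists>\<kappa>>0. \<forall>n\<ge>1. \<forall>est\<in>estimators n.
     ennreal (\<kappa> * real n powr (- (2*\<beta> / (2*\<beta> + 1)))) \<le> (SUP s\<in>Hclass \<beta> P'. risk n s est)"
proof (intro exI conjI allI impI ballI)
  let ?c = "\<xi> * \<alpha> / (Aconst \<phi> \<beta>)\<^sup>2"
  define K where "K = max 1 (10 * ?c)"
  define \<kappa> where "\<kappa> = \<xi> * \<alpha> / (32 * (Aconst \<phi> \<beta>)\<^sup>2) * (4 powr (-2*\<beta>) * K powr (-2*\<beta> / (2*\<beta> + 1)))"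
  have K: "1 \<le> K" unfolding K_def by simp
  then show "0 < \<kappa>" unfolding \<kappa>_def using \<xi>_pos \<alpha>_pos Aconst_pos by (intro mult_pos_pos divide_pos_pos) auto
  fix n :: nat and est assume n: "1 \<le> n" and est: "est \<in> estimators n"
  obtain D where D: "even D" "0 < D" and large: "K * real n \<le> real D powr (2*\<beta> + 1)"
    and rate: "4 powr (-2*\<beta>) * K powr (-2*\<beta> / (2*\<beta> + 1)) * real n powr (- (2*\<beta> / (2*\<beta> + 1)))
      \<le> real D powr (-2*\<beta>)"
    using obtain_even_resolution[OF \<beta>_pos K n] by blast
  have "10 * ?c * real n \<le> real D powr (2*\<beta> + 1)"
    using large unfolding K_def by (meson max.cobounded2 mult_right_mono of_nat_0_le_iff order_trans)
  moreover have "0 < real D powr (2*\<beta> + 1)" using D(2) by simp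
  ultimately have "real n * affinity_defect D \<le> 1/20"
    unfolding affinity_defect_eq[OF D(2)] using Aconst_pos by (simp add: field_simps)
  then have risk: "ennreal (real D * separation D / 4) \<le> (SUP s\<in>Hclass \<beta> P'. risk n s est)"
    by (rule assouad_bound[OF D _ est])
  have "\<kappa> * real n powr (- (2*\<beta> / (2*\<beta> + 1)))
      = \<xi> * \<alpha> / (32 * (Aconst \<phi> \<beta>)\<^sup>2)
        * (4 powr (-2*\<beta>) * K powr (-2*\<beta> / (2*\<beta> + 1)) * real n powr (- (2*\<beta> / (2*\<beta> + 1))))"
    unfolding \<kappa>_def by (simp only: mult.assoc)
  also have "\<dots> \<le> \<xi> * \<alpha> / (32 * (Aconst \<phi> \<beta>)\<^sup>2) * real D powr (-2*\<beta>)"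
    using \<xi>_pos \<alpha>_pos by (intro mult_left_mono[OF rate]) simp
  also have "\<dots> = real D * separation D / 4"
    by (rule separation_eq[symmetric, OF D(2)])
  finally show "ennreal (\<kappa> * real n powr (- (2*\<beta> / (2*\<beta> + 1)))) \<le> (SUP s\<in>Hclass \<beta> P'. risk n s est)"
    using risk by (meson ennreal_leI order_trans)
qed

end

theorem theorem3:
  fixes \<beta>lo \<beta>hi \<alpha> \<xi> :: real and \<phi> \<omega> :: "real \<Rightarrow> real"
    and Lt :: "real poly" and \<epsilon>t Ct Mt :: real and P' :: params
  assumes "0 < \<beta>lo" "\<beta>lo < \<beta>hi" "0 < \<alpha>" "0 < \<xi>"
    and phi_smooth: "\<forall>k x. dn k \<phi> differentiable at x"
    and phi_supp: "\<exists>a b. 1/4 < a \<and> b < 3/4 \<and> (\<forall>x. x \<notin> {a..b} \<longrightarrow> \<phi> x = 0)"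
    and phi_int0: "integral\<^sup>L lborel \<phi> = 0"
    and phi_sq1: "integral\<^sup>L lborel (\<lambda>x. (\<phi> x)\<^sup>2) = 1"
    and A_gt1: "\<forall>\<beta>\<in>{\<beta>lo..\<beta>hi}. Aconst \<phi> \<beta> > 1"
    and omega_T: "\<omega> \<in> Tclass \<alpha> \<xi>"
    and omega_H: "\<forall>\<beta>\<in>{\<beta>lo..\<beta>hi}. \<omega> \<in> Hclass \<beta>
        \<lparr>p_gamma = \<alpha>/4, p_lplus = ln (2*\<xi>), p_L = Lt, p_eps = \<epsilon>t, p_C = Ct,
         p_alpha = \<alpha>, p_xi = \<xi>, p_M = Mt\<rparr>"
    and J_sub: "\<forall>\<beta>\<in>{\<beta>lo..\<beta>hi}. \<forall>D. even D \<and> 0 < D \<longrightarrow> Jclass \<phi> \<omega> \<alpha> \<xi> \<beta> D \<subseteq> Hclass \<beta> P'"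
  shows "\<forall>\<beta>\<in>{\<beta>lo..\<beta>hi}. \<exists>\<kappa>>0. \<forall>n\<ge>1. \<forall>est\<in>estimators n.
           ennreal (\<kappa> * real n powr (- (2*\<beta> / (2*\<beta> + 1)))) \<le> (SUP s\<in>Hclass \<beta> P'. risk n s est)"
proof
  \<comment> \<open>The regularity of \<open>\<omega>\<close> and \<open>\<integral>\<phi> = 0\<close> only serve to make \<open>J_sub\<close> plausible; the proof
    uses the inclusion itself, the plateau of \<open>\<omega>\<close> and the support and \<open>L\<^sup>2\<close> norm of \<open>\<phi>\<close>.\<close>
  fix \<beta> assume \<beta>: "\<beta> \<in> {\<beta>lo..\<beta>hi}"
  obtain a b where support: "1/4 < a" "b < 3/4" "\<forall>x. x \<notin> {a..b} \<longrightarrow> \<phi> x = 0"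
    using phi_supp by blast
  have "continuous_on UNIV \<phi>"
    using phi_smooth[rule_format, of 0] unfolding dn_def
    by (auto intro!: continuous_at_imp_continuous_on differentiable_imp_continuous_within)
  then have "\<phi> \<in> borel_measurable borel" by (rule borel_measurable_continuous_onI)
  moreover have "integrable lborel (\<lambda>x. (\<phi> x)\<^sup>2)"
    using phi_sq1 not_integrable_integral_eq by fastforce
  then have "(\<integral>\<^sup>+x. ennreal ((\<phi> x)\<^sup>2) \<partial>lborel) = 1"
    using phi_sq1 by (subst nn_integral_eq_integral) auto
  moreover have "\<forall>x\<in>{- 3 * \<alpha> / 4 .. 3 * \<alpha> / 4}. \<omega> x = 2 * \<xi>"
    using omega_T unfolding Tclass_def by blast
  ultimately interpret bump_hypercube \<phi> \<omega> \<alpha> \<xi> \<beta> P' a b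
  proof unfold_locales
    show "0 < \<beta>" using \<beta> \<open>0 < \<beta>lo\<close> by simp
    show "0 < Aconst \<phi> \<beta>" using A_gt1 \<beta> by fastforce
    show "\<forall>D. even D \<and> 0 < D \<longrightarrow> Jclass \<phi> \<omega> \<alpha> \<xi> \<beta> D \<subseteq> Hclass \<beta> P'" using J_sub \<beta> by blast
  qed (use assms support in auto)
  show "\<exists>\<kappa>>0. \<forall>n\<ge>1. \<forall>est\<in>estimators n.
      ennreal (\<kappa> * real n powr (- (2*\<beta> / (2*\<beta> + 1)))) \<le> (SUP s\<in>Hclass \<beta> P'. risk n s est)"
    by (rule minimax_lower_bound)
qed

end
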